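(* Let $\mathfrak{A}$ be a class of transitive dynamical systems. Suppose that $\mathfrak{A}$ contains at least one system $(X,f)$ having a point $x\in X$ with dense orbit $\{f^n(x):n\ge 0\}$ such that the points $f^i(x)$, $i\in\mathbb{N}$, are pairwise distinct (a non-periodic system), and suppose there exists some strongly mixing dynamical system which is not in $\mathfrak{A}$. Then there is no Furstenberg family $\mathcal{F}$ such that for every dynamical system $(Y,g)$: $(Y,g)\in\mathfrak{A}$ if and only if $(Y,g)$ is $\mathcal{F}$-transitive.
   Context: A dynamical system is a pair $(X,f)$ with $X$ a compact metric space and $f:X\to X$ continuous. $\mathbb{N}=\{1,2,\dots\}$. For subsets $U,V\subset X$, $N(U,V)=\{n\in\mathbb{N}: U\cap f^{-n}(V)\neq\emptyset\}$. $(X,f)$ is transitive if $N(U,V)\ne\emptyset$ for all non-empty open $U,V\subset X$, and strongly mixing if $N(U,V)$ is cofinite for all non-empty open $U,V$. A Furstenberg family is a collection $\mathcal{F}$ of subsets of $\mathbb{N}$ such that $F_1\subset F_2$ and $F_1\in\mathcal{F}$ imply $F_2\in\mathcal{F}$. $(X,f)$ is $\mathcal{F}$-transitive if $N(U,V)\in\mathcal{F}$ for all non-empty open $U,V\subset X$. *)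

theory Defs
  imports "HOL-Analysis.Analysis"
begin

definition dynsys :: "'a::metric_space set \<Rightarrow> ('a \<Rightarrow> 'a) \<Rightarrow> bool" where
  "dynsys X f \<longleftrightarrow> compact X \<and> continuous_on X f \<and> f ` X \<subseteq> X"

definition hitting_times :: "'a set \<Rightarrow> ('a \<Rightarrow> 'a) \<Rightarrow> 'a set \<Rightarrow> 'a set \<Rightarrow> nat set" where
  "hitting_times X f U V = {n. n \<ge> 1 \<and> (\<exists>x\<in>U \<inter> X. (f ^^ n) x \<in> V)}"

definition transitive_sys :: "'a::metric_space set \<Rightarrow> ('a \<Rightarrow> 'a) \<Rightarrow> bool" where
  "transitive_sys X f \<longleftrightarrow> (\<forall>U V. openin (top_of_set X) U \<and> U \<noteq> {} \<and>
      openin (top_of_set X) V \<and> V \<noteq> {} \<longrightarrow> hitting_times X f U V \<noteq> {})"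

definition strongly_mixing :: "'a::metric_space set \<Rightarrow> ('a \<Rightarrow> 'a) \<Rightarrow> bool" where
  "strongly_mixing X f \<longleftrightarrow> (\<forall>U V. openin (top_of_set X) U \<and> U \<noteq> {} \<and>
      openin (top_of_set X) V \<and> V \<noteq> {} \<longrightarrow> finite ({1..} - hitting_times X f U V))"

definition furstenberg_family :: "nat set set \<Rightarrow> bool" where
  "furstenberg_family \<F> \<longleftrightarrow> (\<forall>F\<in>\<F>. F \<subseteq> {1..}) \<and>
      (\<forall>F1 F2. F1 \<in> \<F> \<and> F1 \<subseteq> F2 \<and> F2 \<subseteq> {1..} \<longrightarrow> F2 \<in> \<F>)"

definition F_transitive :: "nat set set \<Rightarrow> 'a::metric_space set \<Rightarrow> ('a \<Rightarrow> 'a) \<Rightarrow> bool" where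
  "F_transitive \<F> X f \<longleftrightarrow> (\<forall>U V. openin (top_of_set X) U \<and> U \<noteq> {} \<and>
      openin (top_of_set X) V \<and> V \<noteq> {} \<longrightarrow> hitting_times X f U V \<in> \<F>)"

definition nonperiodic_sys :: "'a::metric_space set \<Rightarrow> ('a \<Rightarrow> 'a) \<Rightarrow> bool" where
  "nonperiodic_sys X f \<longleftrightarrow> (\<exists>x\<in>X. X \<subseteq> closure (range (\<lambda>n. (f ^^ n) x)) \<and>
      inj_on (\<lambda>i. (f ^^ i) x) {1..})"

end

theory Submission
  imports Defs
begin

text \<open>If the point x has pairwise distinct iterates f x, f^2 x, ..., then for any finite set S
  of positive times, f x is not a fixed point of any f^n with n \<in> S, so small enough
  neighbourhoods U, V of f x have N(U,V) disjoint from S. Consequently a Furstenberg family for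
  which such a system is transitive contains every cofinite subset of {1,2,...}; but then every
  strongly mixing system is transitive for it, including the one outside the class.\<close>

lemma funpow_image_subset:
  assumes "f ` X \<subseteq> X"
  shows "(f ^^ n) ` X \<subseteq> X"
  by (induction n) (use assms in auto)

lemma continuous_on_funpow:
  assumes "continuous_on X f" "f ` X \<subseteq> X"
  shows "continuous_on X (f ^^ n)"
proof (induction n)
  case 0
  then show ?case by (simp add: continuous_on_id)
next
  case (Suc n)
  have "continuous_on X (f \<circ> (f ^^ n))"
    using Suc continuous_on_subset[OF assms(1) funpow_image_subset[OF assms(2)]]
    by (rule continuous_on_compose)
  then show ?case by simp
qed

lemma hitting_times_avoid_non_return_times:
  fixes X :: "'a::metric_space set"
  assumes f: "continuous_on X f" "f ` X \<subseteq> X" and "y \<in> X" and "finite S"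
    and no_return: "\<And>n. n \<in> S \<Longrightarrow> (f ^^ n) y \<noteq> y"
  obtains U V where "openin (top_of_set X) U" "y \<in> U" "openin (top_of_set X) V" "y \<in> V"
    "hitting_times X f U V \<inter> S = {}"
proof -
  obtain e :: real where "e > 0" and e: "\<And>n. n \<in> S \<Longrightarrow> 2 * e \<le> dist ((f ^^ n) y) y"
  proof
    let ?e = "(if S = {} then 1 else Min ((\<lambda>n. dist ((f ^^ n) y) y) ` S)) / 2"
    show "?e > 0" using \<open>finite S\<close> no_return by auto
    show "2 * ?e \<le> dist ((f ^^ n) y) y" if "n \<in> S" for n using that \<open>finite S\<close> by auto
  qed
  define V where "V = X \<inter> ball y e"
  define U where "U = {z \<in> X. \<forall>n\<in>S. (f ^^ n) z \<in> ball ((f ^^ n) y) e}"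
  have "U = (\<Inter>n\<in>S. X \<inter> (f ^^ n) -` ball ((f ^^ n) y) e) \<inter> X"
    by (auto simp: U_def)
  also have "openin (top_of_set X) \<dots>"
    using \<open>finite S\<close>
    by (intro openin_INT[where T = "top_of_set X", simplified]
          continuous_openin_preimage_gen continuous_on_funpow[OF f]) auto
  finally have "openin (top_of_set X) U" .
  moreover have "openin (top_of_set X) V"
    unfolding V_def by (simp add: openin_open_Int)
  moreover have "hitting_times X f U V \<inter> S = {}"
  proof (rule ccontr)
    assume "hitting_times X f U V \<inter> S \<noteq> {}"
    then obtain n z where "n \<in> S" "z \<in> U" "(f ^^ n) z \<in> V"
      by (auto simp: hitting_times_def)
    then have "dist ((f ^^ n) y) ((f ^^ n) z) < e" "dist y ((f ^^ n) z) < e"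
      by (auto simp: U_def V_def)
    then show False
      using e[OF \<open>n \<in> S\<close>] dist_triangle2[of "(f ^^ n) y" y "(f ^^ n) z"] by linarith
  qed
  ultimately show thesis
    using that \<open>y \<in> X\<close> \<open>e > 0\<close> by (auto simp: U_def V_def)
qed

lemma inj_iterates_no_return:
  assumes "inj_on (\<lambda>i. (f ^^ i) x) {1..}" and "n \<ge> 1"
  shows "(f ^^ n) (f x) \<noteq> f x"
proof
  assume "(f ^^ n) (f x) = f x"
  then have "(f ^^ Suc n) x = (f ^^ 1) x"
    by (simp only: funpow_Suc_right o_apply One_nat_def funpow_0)
  then have "Suc n = 1"
    by (rule inj_onD[OF assms(1)]) simp_all
  with \<open>n \<ge> 1\<close> show False by simp
qed

lemma F_transitive_nonperiodic_imp_cofinite_mem: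
  assumes "furstenberg_family \<F>" "dynsys X f" "F_transitive \<F> X f" "nonperiodic_sys X f"
    and "C \<subseteq> {1..}" "finite ({1..} - C)"
  shows "C \<in> \<F>"
proof -
  obtain x where "x \<in> X" and inj: "inj_on (\<lambda>i. (f ^^ i) x) {1..}"
    using assms(4) unfolding nonperiodic_sys_def by blast
  have f: "continuous_on X f" "f ` X \<subseteq> X"
    using assms(2) by (simp_all add: dynsys_def)
  have "f x \<in> X" using \<open>x \<in> X\<close> f(2) by blast
  have no_return: "(f ^^ n) (f x) \<noteq> f x" if "n \<in> {1..} - C" for n
    using inj_iterates_no_return[OF inj] that by simp
  obtain U V where UV: "openin (top_of_set X) U" "f x \<in> U" "openin (top_of_set X) V" "f x \<in> V"
    and avoid: "hitting_times X f U V \<inter> ({1..} - C) = {}"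
    using hitting_times_avoid_non_return_times[OF f \<open>f x \<in> X\<close> assms(6) no_return] .
  have "hitting_times X f U V \<in> \<F>"
    using assms(3) UV unfolding F_transitive_def by blast
  moreover have "hitting_times X f U V \<subseteq> C"
    using avoid by (auto simp: hitting_times_def)
  ultimately show ?thesis
    using assms(1,5) unfolding furstenberg_family_def by blast
qed

lemma strongly_mixing_imp_F_transitive:
  assumes "strongly_mixing Y g"
    and cofinite: "\<And>C. C \<subseteq> {1..} \<Longrightarrow> finite ({1..} - C) \<Longrightarrow> C \<in> \<F>"
  shows "F_transitive \<F> Y g"
proof (unfold F_transitive_def, intro allI impI)
  fix U V
  assume "openin (top_of_set Y) U \<and> U \<noteq> {} \<and> openin (top_of_set Y) V \<and> V \<noteq> {}"
  then have "finite ({1..} - hitting_times Y g U V)"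
    using assms(1) unfolding strongly_mixing_def by blast
  moreover have "hitting_times Y g U V \<subseteq> {1..}"
    by (auto simp: hitting_times_def)
  ultimately show "hitting_times Y g U V \<in> \<F>"
    using cofinite by blast
qed

theorem proposition3p1:
  fixes \<A> :: "'a::metric_space set \<Rightarrow> ('a \<Rightarrow> 'a) \<Rightarrow> bool"
  assumes "\<And>X f. \<A> X f \<Longrightarrow> dynsys X f \<and> transitive_sys X f"
    and "\<exists>X f. \<A> X f \<and> nonperiodic_sys X f"
    and "\<exists>Y g. dynsys Y g \<and> strongly_mixing Y g \<and> \<not> \<A> Y g"
  shows "\<not> (\<exists>\<F>. furstenberg_family \<F> \<and>
           (\<forall>Y g. dynsys Y g \<longrightarrow> (\<A> Y g \<longleftrightarrow> F_transitive \<F> Y g)))"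
proof
  assume "\<exists>\<F>. furstenberg_family \<F> \<and>
           (\<forall>Y g. dynsys Y g \<longrightarrow> (\<A> Y g \<longleftrightarrow> F_transitive \<F> Y g))"
  then obtain \<F> where \<F>: "furstenberg_family \<F>"
    and char: "\<And>Y g. dynsys Y g \<Longrightarrow> \<A> Y g \<longleftrightarrow> F_transitive \<F> Y g" by blast
  obtain X f where "\<A> X f" "nonperiodic_sys X f" using assms(2) by blast
  moreover have "dynsys X f" using assms(1)[OF \<open>\<A> X f\<close>] by blast
  ultimately have cofinite: "C \<in> \<F>" if "C \<subseteq> {1..}" "finite ({1..} - C)" for C
    using F_transitive_nonperiodic_imp_cofinite_mem[OF \<F>] char that by blast
  obtain Y g where "dynsys Y g" "strongly_mixing Y g" "\<not> \<A> Y g"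
    using assms(3) by blast
  then show False
    using strongly_mixing_imp_F_transitive[OF _ cofinite] char by blast
qed

end
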